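(* Consider Algorithm 1 in the asynchronous model described in the context and assume $\delta\le\frac17$. Let $v,u$ be two nodes and let $T\ge T_s$. For $i\ge1$ let $f_i$ (respectively $g_i$) denote the $i$-th full frame of $v$ (respectively $u$) after $T$. Then some frame in $\{f_1,f_2\}$ together with some frame in $\{g_1,g_2\}$ forms an aligned pair, i.e., one of $(f_1,g_1),(f_1,g_2),(f_2,g_1),(f_2,g_2)$ is aligned.
   Context: Each node $u$ has a clock $C_u$ with $(1-\delta)\Delta t\le C_u(t+\Delta t)-C_u(t)\le(1+\delta)\Delta t$ for all real times $t$ and $\Delta t\ge0$; offsets between clocks are arbitrary. In Algorithm 1 each node, from its (arbitrary) start time, partitions its local time into consecutive frames of length $L$ as measured by its own clock, each frame divided into three consecutive slots of local length $L/3$; frames and slots are regarded as real-time intervals. $T_s$ is the real time by which all nodes have started. A full frame after $T$ is a frame starting at or after $T$. A pair of frames $(f,g)$ is aligned if at least one slot of $f$ lies completely within $g$ in real time. *)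

theory Defs
  imports Complex_Main
begin

definition drift_clock :: "real \<Rightarrow> (real \<Rightarrow> real) \<Rightarrow> bool" where
  "drift_clock \<delta> C \<longleftrightarrow> (\<forall>t \<Delta>. \<Delta> \<ge> 0 \<longrightarrow>
      (1 - \<delta>) * \<Delta> \<le> C (t + \<Delta>) - C t \<and> C (t + \<Delta>) - C t \<le> (1 + \<delta>) * \<Delta>)"

text \<open>The k-th frame (k = 0,1,...) of a node with clock C started at real time s,
  as a real-time interval: local times [C s + k L, C s + (k+1) L).\<close>
definition frame :: "(real \<Rightarrow> real) \<Rightarrow> real \<Rightarrow> real \<Rightarrow> nat \<Rightarrow> real set" where
  "frame C s L k = {t. C s + real k * L \<le> C t \<and> C t < C s + (real k + 1) * L}"

definition slot :: "(real \<Rightarrow> real) \<Rightarrow> real \<Rightarrow> real \<Rightarrow> nat \<Rightarrow> nat \<Rightarrow> real set" where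
  "slot C s L k j = {t. C s + real k * L + real j * L / 3 \<le> C t \<and>
                        C t < C s + real k * L + (real j + 1) * L / 3}"

definition aligned ::
  "(real \<Rightarrow> real) \<Rightarrow> real \<Rightarrow> nat \<Rightarrow> (real \<Rightarrow> real) \<Rightarrow> real \<Rightarrow> nat \<Rightarrow> real \<Rightarrow> bool" where
  "aligned C1 s1 k1 C2 s2 k2 L \<longleftrightarrow> (\<exists>j<3. slot C1 s1 L k1 j \<subseteq> frame C2 s2 L k2)"

definition full_frame_after :: "(real \<Rightarrow> real) \<Rightarrow> real \<Rightarrow> real \<Rightarrow> real \<Rightarrow> nat \<Rightarrow> bool" where
  "full_frame_after C s L T k \<longleftrightarrow> (\<forall>t \<in> frame C s L k. T \<le> t)"

text \<open>Index of the first full frame after T; the i-th full frame is then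
  frame number (first_full C s L T + (i - 1)), since frames are consecutive.\<close>
definition first_full :: "(real \<Rightarrow> real) \<Rightarrow> real \<Rightarrow> real \<Rightarrow> real \<Rightarrow> nat" where
  "first_full C s L T = (LEAST k. full_frame_after C s L T k)"

end

theory Submission
  imports Defs "HOL-Analysis.Analysis"
begin

text \<open>
  A clock with drift \<open>\<delta> < 1\<close> is a strictly increasing bijection of the real line, so frames
  and slots are half-open real-time intervals whose end points are values of the inverse
  clock; a local duration \<open>d\<close> takes between \<open>d/(1+\<delta>)\<close> and \<open>d/(1-\<delta>)\<close> real time.
  The first full frames of both nodes start within one longest frame \<open>\<Lambda> = L/(1-\<delta>)\<close>
  after \<open>T\<close>. Since \<open>\<delta> \<le> 1/7\<close> gives \<open>3\<Lambda> \<le> 4\<lambda>\<close> for the shortest frame \<open>\<lambda> = L/(1+\<delta>)\<close>,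
  four slots of \<open>v\<close> reach past the start of \<open>g\<^sub>1\<close>. Let slot \<open>i\<close> be the first one starting
  inside \<open>g\<^sub>1 \<union> g\<^sub>2\<close>: either it lies in \<open>g\<^sub>1\<close>, or in \<open>g\<^sub>2\<close>, or it straddles the boundary of
  \<open>g\<^sub>1\<close> and \<open>g\<^sub>2\<close>, and then slot \<open>i+1\<close> lies in \<open>g\<^sub>2\<close> because two slots are shorter than a frame.
\<close>

locale clock =
  fixes \<delta> :: real and C :: "real \<Rightarrow> real"
  assumes drift: "drift_clock \<delta> C"
    and nonneg: "0 \<le> \<delta>" and slow: "\<delta> < 1"
begin

lemma diff_bounds:
  assumes "t \<le> t'"
  shows "(1 - \<delta>) * (t' - t) \<le> C t' - C t" and "C t' - C t \<le> (1 + \<delta>) * (t' - t)"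
  using drift assms unfolding drift_clock_def
  by (metis add.commute diff_add_cancel diff_ge_0_iff_ge)+

lemma strict_mono: "strict_mono C"
proof (rule strict_monoI)
  fix t t' :: real
  assume "t < t'"
  then have "0 < (1 - \<delta>) * (t' - t)" using slow by simp
  then show "C t < C t'" using diff_bounds(1)[of t t'] \<open>t < t'\<close> by linarith
qed

lemma lipschitz: "(1 + \<delta>)-lipschitz_on UNIV C"
proof (rule lipschitz_onI)
  fix t t' :: real
  show "dist (C t) (C t') \<le> (1 + \<delta>) * dist t t'"
  proof (cases "t \<le> t'")
    case True
    then show ?thesis
      using diff_bounds(2)[OF True] strict_mono_less_eq[OF strict_mono, of t t']
      by (simp add: dist_real_def abs_minus_commute)
  next
    case False
    then show ?thesis
      using diff_bounds(2)[of t' t] strict_mono_less_eq[OF strict_mono, of t' t]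
      by (simp add: dist_real_def)
  qed
qed (use nonneg in simp)

lemma surj: "surj C"
proof -
  have "\<exists>t. C t = c" for c
  proof -
    define r where "r = \<bar>c - C 0\<bar> / (1 - \<delta>)"
    have r: "0 \<le> r" "(1 - \<delta>) * r = \<bar>c - C 0\<bar>" using slow by (auto simp: r_def)
    have "C (- r) \<le> c" using diff_bounds(1)[of "- r" 0] r by simp
    moreover have "c \<le> C r" using diff_bounds(1)[of 0 r] r by simp
    moreover have "continuous_on {- r..r} C"
      using lipschitz_on_continuous_on[OF lipschitz] continuous_on_subset by blast
    ultimately show ?thesis using IVT'[of C "- r" c r] r by auto
  qed
  then show ?thesis by (metis surjI)
qed

lemma inv_le_iff: "inv C c \<le> t \<longleftrightarrow> c \<le> C t"
  by (metis surj surj_f_inv_f strict_mono strict_mono_less_eq)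

lemma less_inv_iff: "t < inv C c \<longleftrightarrow> C t < c"
  using inv_le_iff by (meson not_le)

lemma preimage_interval: "{t. a \<le> C t \<and> C t < b} = {inv C a..<inv C b}"
  by (auto simp: inv_le_iff less_inv_iff)

lemma inv_diff_bounds:
  assumes "c \<le> c'"
  shows "(c' - c) / (1 + \<delta>) \<le> inv C c' - inv C c" and "inv C c' - inv C c \<le> (c' - c) / (1 - \<delta>)"
proof -
  have le: "inv C c \<le> inv C c'" using assms inv_le_iff surj surj_f_inv_f by metis
  have "c' - c = C (inv C c') - C (inv C c)" using surj surj_f_inv_f by metis
  then show "(c' - c) / (1 + \<delta>) \<le> inv C c' - inv C c" "inv C c' - inv C c \<le> (c' - c) / (1 - \<delta>)"
    using diff_bounds[OF le] nonneg slow by (simp_all add: field_simps)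
qed

lemma frame_eq: "frame C s L k = {inv C (C s + real k * L)..<inv C (C s + real (Suc k) * L)}"
  unfolding frame_def preimage_interval by (simp add: algebra_simps)

text \<open>Slot \<open>j\<close> counted from the start of frame \<open>k\<close>, running over consecutive frames.\<close>
lemma slot_eq:
  "slot C s L (k + j div 3) (j mod 3) =
     {inv C (C s + real k * L + real j * L / 3)..<inv C (C s + real k * L + real (Suc j) * L / 3)}"
proof -
  have j: "real j = 3 * real (j div 3) + real (j mod 3)"
    by (metis div_mult_mod_eq mult.commute of_nat_add of_nat_mult of_nat_numeral)
  show ?thesis
    unfolding slot_def preimage_interval by (simp add: j algebra_simps add_divide_distrib)
qed

lemma full_frame_after_iff:
  assumes "0 < L"
  shows "full_frame_after C s L T k \<longleftrightarrow> T \<le> inv C (C s + real k * L)"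
proof -
  have "L / (1 + \<delta>) \<le> inv C (C s + real (Suc k) * L) - inv C (C s + real k * L)"
    using inv_diff_bounds(1)[of "C s + real k * L" "C s + real (Suc k) * L"] assms
    by (simp add: algebra_simps)
  moreover have "0 < L / (1 + \<delta>)" using assms nonneg by simp
  ultimately have "inv C (C s + real k * L) < inv C (C s + real (Suc k) * L)" by linarith
  then show ?thesis unfolding full_frame_after_def frame_eq by force
qed

lemma first_full_start_bounds:
  assumes "0 < L" and "s \<le> T"
  shows "T \<le> inv C (C s + real (first_full C s L T) * L)"
    and "inv C (C s + real (first_full C s L T) * L) < T + L / (1 - \<delta>)"
proof -
  have inv_C: "inv C (C t) = t" for t by (simp add: inv_f_f strict_mono_imp_inj_on[OF strict_mono])
  obtain n :: nat where "(1 + \<delta>) * (T - s) / L < real n" using reals_Archimedean2 by blast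
  then have "T - s \<le> real n * L / (1 + \<delta>)" using assms nonneg by (simp add: field_simps)
  also have "\<dots> \<le> inv C (C s + real n * L) - s"
    using inv_diff_bounds(1)[of "C s" "C s + real n * L"] assms inv_C by simp
  finally have "full_frame_after C s L T n" using full_frame_after_iff[OF assms(1)] by simp
  then have full: "full_frame_after C s L T (first_full C s L T)"
    unfolding first_full_def by (rule LeastI)
  then show "T \<le> inv C (C s + real (first_full C s L T) * L)"
    using full_frame_after_iff[OF assms(1)] by simp
  show "inv C (C s + real (first_full C s L T) * L) < T + L / (1 - \<delta>)"
  proof (cases "first_full C s L T")
    case 0
    moreover have "0 < L / (1 - \<delta>)" using assms slow by simp
    ultimately show ?thesis using assms inv_C by simp
  next
    case (Suc k)
    then have "k < (LEAST k. full_frame_after C s L T k)" unfolding first_full_def by simp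
    then have "\<not> full_frame_after C s L T k" by (rule not_less_Least)
    then have "inv C (C s + real k * L) < T" using full_frame_after_iff[OF assms(1)] by simp
    moreover have "inv C (C s + real (Suc k) * L) - inv C (C s + real k * L) \<le> L / (1 - \<delta>)"
      using inv_diff_bounds(2)[of "C s + real k * L" "C s + real (Suc k) * L"] assms
      by (simp add: algebra_simps)
    ultimately show ?thesis using Suc by simp
  qed
qed

end

lemma exists_first_crossing:
  fixes p :: "nat \<Rightarrow> real"
  assumes "\<And>j. p (Suc j) \<le> p j + \<sigma>" and "x \<le> p n"
  shows "\<exists>i\<le>n. x \<le> p i \<and> p i \<le> max (p 0) (x + \<sigma>)"
  using assms(2)
proof (induction n)
  case (Suc n)
  show ?case
  proof (cases "x \<le> p n")
    case True
    then show ?thesis using Suc.IH le_SucI by blast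
  next
    case False
    then show ?thesis using Suc.prems assms(1)[of n] by (intro exI[of _ "Suc n"]) auto
  qed
qed auto

lemma slot_within_consecutive_frames:
  fixes p q :: "nat \<Rightarrow> real"
  assumes "p (Suc i) \<le> p i + \<sigma>" and "p (Suc (Suc i)) \<le> p (Suc i) + \<sigma>"
    and "q 0 \<le> p i" and "p i + \<sigma> \<le> q 2" and "q 1 + 2 * \<sigma> \<le> q 2"
  shows "\<exists>j\<in>{i, Suc i}. \<exists>b\<in>{0, 1}. q b \<le> p j \<and> p (Suc j) \<le> q (Suc b)"
proof -
  consider "p (Suc i) \<le> q 1" | "q 1 \<le> p i" | "p i < q 1" "q 1 < p (Suc i)" by linarith
  then show ?thesis
  proof cases
    case 1
    then show ?thesis using assms(3) by (intro bexI[of _ i] bexI[of _ 0]) auto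
  next
    case 2
    then show ?thesis using assms(1,4) by (intro bexI[of _ i] bexI[of _ 1]) (auto simp: numeral_2_eq_2)
  next
    case 3
    then show ?thesis using assms(1,2,5)
      by (intro bexI[of _ "Suc i"] bexI[of _ 1]) (auto simp: numeral_2_eq_2)
  qed
qed

text \<open>
  \<open>p j\<close> and \<open>q b\<close> are the real-time boundaries of the slots of one node and of the frames of the
  other; \<open>fmin\<close> and \<open>fmax\<close> bound the real-time length of a frame from below and above.
\<close>
lemma slot_within_first_two_frames:
  fixes p q :: "nat \<Rightarrow> real"
  assumes slots: "\<And>j. fmin / 3 \<le> p (Suc j) - p j \<and> p (Suc j) - p j \<le> fmax / 3"
    and frames: "\<And>b. fmin \<le> q (Suc b) - q b"
    and starts: "T \<le> p 0" "p 0 < T + fmax" "T \<le> q 0" "q 0 < T + fmax"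
    and ratio: "3 * fmax \<le> 4 * fmin"
  shows "\<exists>j\<le>5. \<exists>b\<in>{0, 1}. q b \<le> p j \<and> p (Suc j) \<le> q (Suc b)"
proof -
  have step: "p (Suc j) \<le> p j + fmax / 3" for j using slots[of j] by simp
  have "p 0 + 4 * (fmin / 3) \<le> p 4"
    using slots[of 0] slots[of 1] slots[of 2] slots[of 3] by (simp add: numeral_eq_Suc)
  then have "q 0 \<le> p 4" using starts ratio by linarith
  then obtain i where i: "i \<le> 4" "q 0 \<le> p i" "p i \<le> max (p 0) (q 0 + fmax / 3)"
    using exists_first_crossing[of p "fmax / 3"] step by blast
  have "q 0 + 2 * fmin \<le> q 2" "q 1 + fmin \<le> q 2"
    using frames[of 0] frames[of 1] by (simp_all add: numeral_2_eq_2)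
  moreover have "0 \<le> fmin" using slots[of 0] ratio by linarith
  ultimately have "p i + fmax / 3 \<le> q 2" "q 1 + 2 * (fmax / 3) \<le> q 2"
    using i(3) starts ratio by (auto simp: max_def split: if_split_asm)
  then obtain j where "j \<in> {i, Suc i}" "\<exists>b\<in>{0, 1}. q b \<le> p j \<and> p (Suc j) \<le> q (Suc b)"
    using slot_within_consecutive_frames[of p i "fmax / 3" q] step i(2) by blast
  moreover have "j \<le> 5" using \<open>j \<in> {i, Suc i}\<close> i(1) by auto
  ultimately show ?thesis by blast
qed

lemma frame_ratio:
  fixes \<delta> L :: real
  assumes "0 \<le> \<delta>" and "\<delta> \<le> 1/7" and "0 < L"
  shows "3 * (L / (1 - \<delta>)) \<le> 4 * (L / (1 + \<delta>))"
  using assms by (simp add: field_simps)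

theorem mainTheorem4:
  fixes C :: "'node \<Rightarrow> real \<Rightarrow> real" and start :: "'node \<Rightarrow> real"
    and \<delta> L T Ts :: real and v u :: 'node
  assumes "0 \<le> \<delta>" and "\<delta> \<le> 1/7" and "0 < L"
    and "\<And>w. drift_clock \<delta> (C w)"
    and "\<And>w. start w \<le> Ts"
    and "Ts \<le> T"
  shows "\<exists>a\<in>{0,1}. \<exists>b\<in>{0,1}.
           aligned (C v) (start v) (first_full (C v) (start v) L T + a)
                   (C u) (start u) (first_full (C u) (start u) L T + b) L"
proof -
  interpret V: clock \<delta> "C v" using assms by unfold_locales auto
  interpret U: clock \<delta> "C u" using assms by unfold_locales auto
  define kv where "kv = first_full (C v) (start v) L T"
  define ku where "ku = first_full (C u) (start u) L T"
  define p where "p j = inv (C v) (C v (start v) + real kv * L + real j * L / 3)" for j :: nat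
  define q where "q b = inv (C u) (C u (start u) + real (ku + b) * L)" for b :: nat
  have started: "start v \<le> T" "start u \<le> T" using assms(5,6) by (meson order.trans)+
  have "\<exists>j\<le>5. \<exists>b\<in>{0, 1}. q b \<le> p j \<and> p (Suc j) \<le> q (Suc b)"
  proof (rule slot_within_first_two_frames[OF _ _ _ _ _ _ frame_ratio[OF assms(1-3)]])
    show "L / (1 + \<delta>) / 3 \<le> p (Suc j) - p j \<and> p (Suc j) - p j \<le> L / (1 - \<delta>) / 3" for j
      using V.inv_diff_bounds[of "C v (start v) + real kv * L + real j * L / 3"
          "C v (start v) + real kv * L + real (Suc j) * L / 3"] assms(3)
      unfolding p_def by (simp add: algebra_simps add_divide_distrib)
    show "L / (1 + \<delta>) \<le> q (Suc b) - q b" for b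
      using U.inv_diff_bounds(1)[of "C u (start u) + real (ku + b) * L"
          "C u (start u) + real (ku + Suc b) * L"] assms(3)
      unfolding q_def by (simp add: algebra_simps)
    show "T \<le> p 0" "p 0 < T + L / (1 - \<delta>)"
      using V.first_full_start_bounds[OF assms(3) started(1)] unfolding p_def kv_def by simp_all
    show "T \<le> q 0" "q 0 < T + L / (1 - \<delta>)"
      using U.first_full_start_bounds[OF assms(3) started(2)] unfolding q_def ku_def by simp_all
  qed
  then obtain j b where j: "j \<le> 5" "b \<in> {0, 1}" "q b \<le> p j" "p (Suc j) \<le> q (Suc b)"
    by blast
  have "slot (C v) (start v) L (kv + j div 3) (j mod 3) \<subseteq> frame (C u) (start u) L (ku + b)"
    unfolding V.slot_eq U.frame_eq using j(3,4) by (auto simp: p_def q_def)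
  then have "aligned (C v) (start v) (kv + j div 3) (C u) (start u) (ku + b) L"
    unfolding aligned_def by (intro exI[of _ "j mod 3"]) simp
  moreover have "j div 3 \<in> {0, 1}" using j(1) by auto
  ultimately show ?thesis using j(2) unfolding kv_def ku_def by blast
qed

end
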